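(* For any real number field $K$ and any $a,b\in K$ with $a>0$ and $b\neq 0$, there exist $x,y,z,u,v,w\in K$ satisfying $$x^2 - ay^2 + au^2 - bv^2 + abw^2 = 0,\qquad z^2 - 4 = au^2,\qquad \mathbb{Q}\left(\tfrac{y}{u}\right) = \mathbb{Q}\left(\tfrac{y^2}{u^2}\right) = K,$$ and $$u\neq 0,\quad x + \frac{yz}{2u} > 2,\quad \frac{y}{u}>1,\quad z>2,\quad abw^2 - bv^2 > 4.$$
   Context: A real number field is a field $K\subset\mathbb{R}$ with $[K:\mathbb{Q}]<\infty$. *)

theory Defs
  imports Complex_Main
begin

definition real_subfield :: "real set \<Rightarrow> bool" where
  "real_subfield K \<longleftrightarrow> 0 \<in> K \<and> 1 \<in> K \<and>
     (\<forall>x\<in>K. \<forall>y\<in>K. x + y \<in> K \<and> x - y \<in> K \<and> x * y \<in> K) \<and>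
     (\<forall>x\<in>K. x \<noteq> 0 \<longrightarrow> inverse x \<in> K)"

text \<open>A real number field: a subfield K of the reals with [K:Q] finite,
  i.e. K is spanned over Q by finitely many of its elements.\<close>
definition real_number_field :: "real set \<Rightarrow> bool" where
  "real_number_field K \<longleftrightarrow> real_subfield K \<and>
     (\<exists>B. finite B \<and> B \<subseteq> K \<and>
        (\<forall>x\<in>K. \<exists>c :: real \<Rightarrow> rat. x = (\<Sum>b\<in>B. of_rat (c b) * b)))"

definition Q_adjoin :: "real \<Rightarrow> real set" where
  "Q_adjoin \<alpha> = \<Inter>{F. real_subfield F \<and> \<alpha> \<in> F}"

end

theory Submission
  imports
    Defs
    "HOL-Computational_Algebra.Polynomial_Factorial"
    "HOL-Computational_Algebra.Fundamental_Theorem_Algebra"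
    "HOL-Computational_Algebra.Field_as_Ring"
begin

text \<open>
  Replace b by c > 0, namely c = b or c = -ab, so that the b-part of the form takes the value
  a c k^2 for every k in K (with v = 0, w = k or v = a k, w = 0). By the primitive element theorem
  K = Q(xi), and for all but finitely many natural n the number M = a x0^2 + c with x0 = xi + n
  satisfies K = Q(M + 1/M): otherwise a conjugate of xi would be mapped to M or 1/M. Put
  theta = (M + 1)/(M - 1); since M + 1/M = 2 (theta^2 + 1)/(theta^2 - 1), both theta and theta^2
  generate K. For a rational t with a t^2 = 1 + e, e > 0 small, the numbers u = 4t/e, z = 2 + 4/e,
  y = theta u, k = 2u/(M - 1) and x = a x0 k satisfy z^2 - 4 = a u^2 and
  x^2 - a y^2 + a u^2 + a c k^2 = 0, the latter because theta^2 - 1 = 4M/(M - 1)^2.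
\<close>

section \<open>Subfields of the reals\<close>

lemma real_number_field_subfield: "real_number_field K \<Longrightarrow> real_subfield K"
  by (simp add: real_number_field_def)

context
  fixes F :: "real set"
  assumes F: "real_subfield F"
begin

lemma real_subfield_0: "0 \<in> F"
  and real_subfield_1: "1 \<in> F"
  and real_subfield_add: "x \<in> F \<Longrightarrow> y \<in> F \<Longrightarrow> x + y \<in> F"
  and real_subfield_diff: "x \<in> F \<Longrightarrow> y \<in> F \<Longrightarrow> x - y \<in> F"
  and real_subfield_mult: "x \<in> F \<Longrightarrow> y \<in> F \<Longrightarrow> x * y \<in> F"
  using F by (simp_all add: real_subfield_def)

lemma real_subfield_inverse: "x \<in> F \<Longrightarrow> inverse x \<in> F"
  using F by (cases "x = 0") (auto simp: real_subfield_def)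

lemma real_subfield_divide: "x \<in> F \<Longrightarrow> y \<in> F \<Longrightarrow> x / y \<in> F"
  by (simp add: divide_inverse real_subfield_mult real_subfield_inverse)

lemma real_subfield_uminus: "x \<in> F \<Longrightarrow> - x \<in> F"
  using real_subfield_diff[OF real_subfield_0] by simp

lemma real_subfield_power: "x \<in> F \<Longrightarrow> x ^ n \<in> F"
  by (induction n) (simp_all add: real_subfield_1 real_subfield_mult)

lemma real_subfield_of_nat: "of_nat n \<in> F"
  by (induction n) (simp_all add: real_subfield_0 real_subfield_1 real_subfield_add)

lemma real_subfield_numeral: "numeral n \<in> F"
  using real_subfield_of_nat[of "numeral n"] by simp

lemma real_subfield_of_int: "of_int n \<in> F"
proof -
  have "(of_int n :: real) = of_nat (nat n) - of_nat (nat (- n))"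
    by simp
  then show ?thesis
    by (simp only: real_subfield_diff real_subfield_of_nat)
qed

lemma real_subfield_of_rat: "of_rat r \<in> F"
proof -
  obtain m n where "quotient_of r = (m, n)"
    by fastforce
  then have "of_rat r = (of_int m / of_int n :: real)"
    by (metis quotient_of_div of_rat_divide of_rat_of_int_eq)
  then show ?thesis
    by (simp add: real_subfield_divide real_subfield_of_int)
qed

lemma real_subfield_Rats: "x \<in> \<rat> \<Longrightarrow> x \<in> F"
  by (auto elim: Rats_cases intro: real_subfield_of_rat)

lemma real_subfield_sum: "(\<And>i. i \<in> I \<Longrightarrow> f i \<in> F) \<Longrightarrow> sum f I \<in> F"
  by (induction I rule: infinite_finite_induct) (simp_all add: real_subfield_0 real_subfield_add)

end

lemmas real_subfield_closed =
  real_subfield_0 real_subfield_1 real_subfield_add real_subfield_diff real_subfield_mult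
  real_subfield_divide real_subfield_uminus real_subfield_power real_subfield_of_nat
  real_subfield_numeral real_subfield_of_rat

lemma real_subfield_Q_adjoin: "real_subfield (Q_adjoin \<alpha>)"
  unfolding real_subfield_def Q_adjoin_def by auto

lemma Q_adjoin_self: "\<alpha> \<in> Q_adjoin \<alpha>"
  unfolding Q_adjoin_def by auto

lemma Q_adjoin_least: "real_subfield F \<Longrightarrow> \<alpha> \<in> F \<Longrightarrow> Q_adjoin \<alpha> \<subseteq> F"
  unfolding Q_adjoin_def by auto

lemma Q_adjoin_subset: "\<alpha> \<in> Q_adjoin \<beta> \<Longrightarrow> Q_adjoin \<alpha> \<subseteq> Q_adjoin \<beta>"
  by (simp add: Q_adjoin_least real_subfield_Q_adjoin)

lemma Q_adjoin_eqI: "real_subfield K \<Longrightarrow> \<alpha> \<in> K \<Longrightarrow> K \<subseteq> Q_adjoin \<alpha> \<Longrightarrow> Q_adjoin \<alpha> = K"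
  using Q_adjoin_least by blast


section \<open>Rational polynomials and algebraic numbers\<close>

definition of_rat_poly :: "rat poly \<Rightarrow> real poly" where
  "of_rat_poly = map_poly of_rat"

lemma coeff_of_rat_poly [simp]: "coeff (of_rat_poly p) i = of_rat (coeff p i)"
  by (simp add: of_rat_poly_def coeff_map_poly)

lemma of_rat_poly_0 [simp]: "of_rat_poly 0 = 0"
  and of_rat_poly_1 [simp]: "of_rat_poly 1 = 1"
  and of_rat_poly_pCons [simp]: "of_rat_poly (pCons c p) = pCons (of_rat c) (of_rat_poly p)"
  and of_rat_poly_smult [simp]: "of_rat_poly (smult c p) = smult (of_rat c) (of_rat_poly p)"
  and of_rat_poly_monom [simp]: "of_rat_poly (monom c n) = monom (of_rat c) n"
  and of_rat_poly_eq_0_iff [simp]: "of_rat_poly p = 0 \<longleftrightarrow> p = 0"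
  by (simp_all add: of_rat_poly_def map_poly_pCons map_poly_smult map_poly_monom
      map_poly_eq_0_iff of_rat_mult)

lemma of_rat_poly_add [simp]: "of_rat_poly (p + q) = of_rat_poly p + of_rat_poly q"
  and of_rat_poly_diff [simp]: "of_rat_poly (p - q) = of_rat_poly p - of_rat_poly q"
  and of_rat_poly_pderiv: "of_rat_poly (pderiv p) = pderiv (of_rat_poly p)"
  by (simp_all add: poly_eq_iff coeff_pderiv of_rat_add of_rat_diff of_rat_mult)

lemma of_rat_poly_mult [simp]: "of_rat_poly (p * q) = of_rat_poly p * of_rat_poly q"
  by (induction p) simp_all

lemma of_rat_poly_power [simp]: "of_rat_poly (p ^ n) = of_rat_poly p ^ n"
  by (induction n) simp_all

lemma of_rat_poly_sum [simp]: "of_rat_poly (sum f I) = (\<Sum>i\<in>I. of_rat_poly (f i))"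
  by (induction I rule: infinite_finite_induct) simp_all

lemma algebraic_iff_rat_poly_root:
  "algebraic x \<longleftrightarrow> (\<exists>p. p \<noteq> 0 \<and> poly (of_rat_poly p) x = 0)"
proof
  assume "algebraic x"
  then obtain p where p: "\<forall>i. coeff p i \<in> \<rat>" "p \<noteq> 0" "poly p x = 0"
    by (auto simp: algebraic_altdef)
  obtain q where "p = of_rat_poly q"
    using ratpolyE[of p] p(1) unfolding of_rat_poly_def by metis
  with p show "\<exists>q. q \<noteq> 0 \<and> poly (of_rat_poly q) x = 0"
    by auto
next
  assume "\<exists>p. p \<noteq> 0 \<and> poly (of_rat_poly p) x = 0"
  then obtain p where "p \<noteq> 0" "poly (of_rat_poly p) x = 0"
    by blast
  then show "algebraic x"
    unfolding algebraic_altdef by (intro exI[of _ "of_rat_poly p"]) auto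
qed

interpretation rat_vs: vector_space "\<lambda>r x. of_rat r * (x :: real)"
  by unfold_locales (auto simp: algebra_simps of_rat_add of_rat_mult)

lemma algebraic_if_powers_in_finite_span:
  assumes B: "finite B" and powers: "\<And>i. x ^ i \<in> rat_vs.span B"
  shows "algebraic x"
  unfolding algebraic_iff_rat_poly_root
proof (cases "inj_on (\<lambda>i. x ^ i) {..card B}")
  case False
  then obtain i j where ij: "i \<noteq> j" "x ^ i = x ^ j"
    unfolding inj_on_def by auto
  define p :: "rat poly" where "p = monom 1 i - monom 1 j"
  have "coeff p i = 1"
    using ij by (simp add: p_def coeff_monom)
  moreover have "poly (of_rat_poly p) x = 0"
    using ij by (simp add: p_def poly_monom)
  ultimately show "\<exists>p. p \<noteq> 0 \<and> poly (of_rat_poly p) x = 0"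
    by (metis zero_neq_one coeff_0)
next
  case True
  define T where "T = (\<lambda>i. x ^ i) ` {..card B}"
  have "card T = Suc (card B)"
    using True by (simp add: T_def card_image)
  then have "rat_vs.dependent T"
    using rat_vs.independent_span_bound[OF B] powers by (force simp: T_def)
  then obtain u where u: "\<exists>v\<in>T. u v \<noteq> 0" "(\<Sum>v\<in>T. of_rat (u v) * v) = 0"
    using rat_vs.dependent_finite[of T] by (auto simp: T_def)
  define p :: "rat poly" where "p = (\<Sum>i\<le>card B. monom (u (x ^ i)) i)"
  from u(1) obtain i where "i \<le> card B" "u (x ^ i) \<noteq> 0"
    by (auto simp: T_def)
  then have "coeff p i \<noteq> 0"
    by (simp add: p_def coeff_sum coeff_monom)
  moreover have "poly (of_rat_poly p) x = (\<Sum>v\<in>T. of_rat (u v) * v)"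
    using True by (simp add: p_def T_def poly_sum poly_monom sum.reindex)
  ultimately show "\<exists>p. p \<noteq> 0 \<and> poly (of_rat_poly p) x = 0"
    using u(2) by (metis coeff_0)
qed

lemma real_number_field_algebraic:
  assumes K: "real_number_field K" and x: "x \<in> K"
  shows "algebraic x"
proof -
  obtain B where B: "finite B" "\<forall>y\<in>K. \<exists>c. y = (\<Sum>b\<in>B. of_rat (c b) * b)"
    using K unfolding real_number_field_def by blast
  have "y \<in> rat_vs.span B" if "y \<in> K" for y
    using B that by (auto simp: rat_vs.span_finite)
  moreover have "x ^ i \<in> K" for i
    using K x by (simp add: real_number_field_subfield real_subfield_power)
  ultimately show ?thesis
    using algebraic_if_powers_in_finite_span[OF B(1)] by blast
qed


section \<open>Minimal polynomials\<close>

definition is_minpoly :: "rat poly \<Rightarrow> real \<Rightarrow> bool" where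
  "is_minpoly g x \<longleftrightarrow> g \<noteq> 0 \<and> poly (of_rat_poly g) x = 0 \<and>
     (\<forall>p. p \<noteq> 0 \<longrightarrow> poly (of_rat_poly p) x = 0 \<longrightarrow> degree g \<le> degree p)"

lemma minpoly_exists:
  assumes "algebraic x"
  shows "\<exists>g. is_minpoly g x"
proof -
  obtain p where "p \<noteq> 0 \<and> poly (of_rat_poly p) x = 0"
    using assms by (auto simp: algebraic_iff_rat_poly_root)
  from ex_has_least_nat[of "\<lambda>p. p \<noteq> 0 \<and> poly (of_rat_poly p) x = 0" p degree, OF this]
  show ?thesis
    unfolding is_minpoly_def by blast
qed

lemma minpoly_nonzero: "is_minpoly g x \<Longrightarrow> g \<noteq> 0"
  and minpoly_root: "is_minpoly g x \<Longrightarrow> poly (of_rat_poly g) x = 0"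
  and minpoly_degree_le: "is_minpoly g x \<Longrightarrow> p \<noteq> 0 \<Longrightarrow> poly (of_rat_poly p) x = 0 \<Longrightarrow> degree g \<le> degree p"
  by (simp_all add: is_minpoly_def)

lemma minpoly_degree_pos:
  assumes g: "is_minpoly g x"
  shows "degree g \<noteq> 0"
proof
  assume "degree g = 0"
  then obtain c where "g = [:c:]"
    by (rule degree_eq_zeroE)
  then show False
    using minpoly_nonzero[OF g] minpoly_root[OF g] by simp
qed

lemma minpoly_simple_root:
  assumes g: "is_minpoly g x"
  shows "poly (pderiv (of_rat_poly g)) x \<noteq> 0"
proof
  assume "poly (pderiv (of_rat_poly g)) x = 0"
  then have "poly (of_rat_poly (pderiv g)) x = 0"
    by (simp add: of_rat_poly_pderiv)
  moreover have "pderiv g \<noteq> 0"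
    using minpoly_degree_pos[OF g] by (simp add: pderiv_eq_0_iff)
  ultimately have "degree g \<le> degree (pderiv g)"
    using minpoly_degree_le[OF g] by blast
  then show False
    using minpoly_degree_pos[OF g] by (simp add: degree_pderiv)
qed

lemma minpoly_coprime_inverse:
  assumes g: "is_minpoly g x" and px: "poly (of_rat_poly p) x \<noteq> 0"
  shows "\<exists>s. poly (of_rat_poly s) x * poly (of_rat_poly p) x = 1"
proof -
  define d where "d = gcd p g"
  obtain e where e: "g = d * e"
    unfolding d_def by (meson dvdE gcd_dvd2)
  have "d dvd p"
    by (simp add: d_def)
  then have "poly (of_rat_poly d) x \<noteq> 0"
    using px by (auto elim: dvdE)
  then have "poly (of_rat_poly e) x = 0"
    using minpoly_root[OF g] e by simp
  moreover have "e \<noteq> 0"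
    using minpoly_nonzero[OF g] e by auto
  ultimately have "degree g \<le> degree e"
    using minpoly_degree_le[OF g] by blast
  moreover have "degree g = degree d + degree e" and "d \<noteq> 0"
    using minpoly_nonzero[OF g] e by (auto simp: degree_mult_eq)
  ultimately have "degree d = 0"
    by simp
  then obtain c where c: "d = [:c:]" "c \<noteq> 0"
    using \<open>d \<noteq> 0\<close> by (metis degree_eq_zeroE pCons_0_0)
  define s where "s = smult (inverse c) (fst (bezout_coefficients p g))"
  have "fst (bezout_coefficients p g) * p + snd (bezout_coefficients p g) * g = [:c:]"
    using bezout_coefficients_fst_snd[of p g] c(1) unfolding d_def by simp
  from arg_cong[OF this, of "\<lambda>q. poly (of_rat_poly q) x"]
  have "poly (of_rat_poly (fst (bezout_coefficients p g))) x * poly (of_rat_poly p) x = of_rat c"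
    by (simp add: minpoly_root[OF g])
  then have "poly (of_rat_poly s) x * poly (of_rat_poly p) x = 1"
    using c(2) by (simp add: s_def of_rat_inverse mult.assoc)
  then show ?thesis ..
qed

lemma real_subfield_rat_poly_values:
  assumes "algebraic x"
  shows "real_subfield (range (\<lambda>p. poly (of_rat_poly p) x))" (is "real_subfield ?R")
  unfolding real_subfield_def
proof (intro conjI ballI impI)
  obtain g where g: "is_minpoly g x"
    using minpoly_exists[OF assms] ..
  have "0 = poly (of_rat_poly 0) x" "1 = poly (of_rat_poly 1) x"
    by simp_all
  then show "0 \<in> ?R" "1 \<in> ?R"
    by blast+
  fix u v
  assume "u \<in> ?R" "v \<in> ?R"
  then obtain p q where u: "u = poly (of_rat_poly p) x" and v: "v = poly (of_rat_poly q) x"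
    by blast
  have "u + v = poly (of_rat_poly (p + q)) x" "u - v = poly (of_rat_poly (p - q)) x"
    "u * v = poly (of_rat_poly (p * q)) x"
    by (simp_all add: u v)
  then show "u + v \<in> ?R" "u - v \<in> ?R" "u * v \<in> ?R"
    by blast+
  assume "u \<noteq> 0"
  then obtain s where "poly (of_rat_poly s) x * u = 1"
    using minpoly_coprime_inverse[OF g] unfolding u by blast
  then have "inverse u = poly (of_rat_poly s) x"
    by (simp add: inverse_unique mult.commute)
  then show "inverse u \<in> ?R"
    by blast
qed

lemma Q_adjoin_algebraicE:
  assumes "algebraic x" and "y \<in> Q_adjoin x"
  obtains p where "y = poly (of_rat_poly p) x"
proof -
  have "x = poly (of_rat_poly [:0, 1:]) x"
    by simp
  then have "Q_adjoin x \<subseteq> range (\<lambda>p. poly (of_rat_poly p) x)"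
    by (intro Q_adjoin_least real_subfield_rat_poly_values[OF assms(1)]) blast
  then show ?thesis
    using assms(2) that by blast
qed


section \<open>Polynomials over a subfield and common roots\<close>

definition poly_over :: "real set \<Rightarrow> real poly \<Rightarrow> bool" where
  "poly_over F p \<longleftrightarrow> (\<forall>i. coeff p i \<in> F)"

context
  fixes F :: "real set"
  assumes F: "real_subfield F"
begin

lemma poly_over_1: "poly_over F 1"
  and poly_over_const: "c \<in> F \<Longrightarrow> poly_over F [:c:]"
  and poly_over_pCons: "c \<in> F \<Longrightarrow> poly_over F p \<Longrightarrow> poly_over F (pCons c p)"
  and poly_over_add: "poly_over F p \<Longrightarrow> poly_over F q \<Longrightarrow> poly_over F (p + q)"
  and poly_over_diff: "poly_over F p \<Longrightarrow> poly_over F q \<Longrightarrow> poly_over F (p - q)"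
  and poly_over_smult: "c \<in> F \<Longrightarrow> poly_over F p \<Longrightarrow> poly_over F (smult c p)"
  and poly_over_monom: "c \<in> F \<Longrightarrow> poly_over F (monom c n)"
  and poly_over_of_rat_poly: "poly_over F (of_rat_poly r)"
  using F by (auto simp: poly_over_def coeff_pCons coeff_monom coeff_1 real_subfield_closed
      split: nat.splits)

lemma poly_over_mult: "poly_over F p \<Longrightarrow> poly_over F q \<Longrightarrow> poly_over F (p * q)"
  unfolding poly_over_def coeff_mult
  by (auto intro!: real_subfield_sum[OF F] real_subfield_mult[OF F])

lemma poly_over_power: "poly_over F p \<Longrightarrow> poly_over F (p ^ n)"
  by (induction n) (simp_all add: poly_over_mult poly_over_1)

lemma poly_over_pcompose: "poly_over F p \<Longrightarrow> poly_over F q \<Longrightarrow> poly_over F (pcompose p q)"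
proof (induction p)
  case (pCons c p)
  then have "c \<in> F" "poly_over F p"
    by (auto simp: poly_over_def coeff_pCons split: nat.splits)
  with pCons show ?case
    by (simp add: pcompose_pCons poly_over_add poly_over_const poly_over_mult)
qed (simp add: poly_over_def real_subfield_0[OF F])

lemma poly_over_mod: "poly_over F p \<Longrightarrow> poly_over F q \<Longrightarrow> poly_over F (p mod q)"
proof (induction "degree p" arbitrary: p rule: less_induct)
  case less
  show ?case
  proof (cases "q = 0 \<or> degree p < degree q")
    case True
    then show ?thesis
      using less.prems by (auto simp: mod_poly_less)
  next
    case False
    define t where "t = monom (lead_coeff p / lead_coeff q) (degree p - degree q)"
    define r where "r = p - t * q"
    have "lead_coeff p / lead_coeff q \<in> F"
      using less.prems F by (simp add: poly_over_def real_subfield_divide)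
    then have r_over: "poly_over F r"
      using less.prems by (simp add: r_def t_def poly_over_diff poly_over_mult poly_over_monom)
    have "p mod q = (r + t * q) mod q"
      by (simp add: r_def)
    also have "\<dots> = r mod q"
      by (rule mod_mult_self1)
    finally have mod_eq: "p mod q = r mod q" .
    have "degree (t * q) \<le> degree t + degree q"
      by (rule degree_mult_le)
    also have "\<dots> \<le> degree p"
      using False degree_monom_le[of "lead_coeff p / lead_coeff q" "degree p - degree q"]
      unfolding t_def by (simp add: le_diff_conv2)
    finally have "degree r \<le> degree p"
      unfolding r_def by (meson degree_diff_le le_refl)
    moreover have "coeff r (degree p) = 0"
      using False by (simp add: r_def t_def coeff_monom_mult)
    ultimately have "r = 0 \<or> degree r < degree p"
      by (metis le_neq_implies_less leading_coeff_0_iff)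
    then show ?thesis
      using less.hyps[OF _ r_over less.prems(2)] mod_eq
      by (auto simp: poly_over_def real_subfield_0[OF F])
  qed
qed

lemma poly_over_normalize: "poly_over F p \<Longrightarrow> poly_over F (normalize p)"
  using F by (simp add: poly_over_def normalize_poly_eq_map_poly coeff_map_poly real_subfield_divide)

lemma poly_over_gcd: "poly_over F p \<Longrightarrow> poly_over F q \<Longrightarrow> poly_over F (gcd p q)"
proof (induction "degree q" arbitrary: p q rule: less_induct)
  case less
  show ?case
  proof (cases "q = 0")
    case True
    then show ?thesis
      using less.prems by (simp add: poly_over_normalize)
  next
    case False
    then have "gcd p q = gcd q (p mod q)"
      by (simp add: gcd.commute)
    moreover have "poly_over F (gcd q (p mod q))"
    proof (cases "p mod q = 0")
      case True
      then show ?thesis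
        using less.prems by (simp add: poly_over_normalize)
    next
      case False
      then show ?thesis
        using \<open>q \<noteq> 0\<close> less by (intro less.hyps poly_over_mod) (simp_all add: degree_mod_less')
    qed
    ultimately show ?thesis
      by simp
  qed
qed

end

definition of_real_poly :: "real poly \<Rightarrow> complex poly" where
  "of_real_poly = map_poly of_real"

lemma of_real_poly_0 [simp]: "of_real_poly 0 = 0"
  and of_real_poly_1 [simp]: "of_real_poly 1 = 1"
  and of_real_poly_pCons [simp]: "of_real_poly (pCons c p) = pCons (of_real c) (of_real_poly p)"
  and of_real_poly_smult [simp]: "of_real_poly (smult c p) = smult (of_real c) (of_real_poly p)"
  and of_real_poly_eq_0_iff [simp]: "of_real_poly p = 0 \<longleftrightarrow> p = 0"
  and degree_of_real_poly [simp]: "degree (of_real_poly p) = degree p"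
  by (simp_all add: of_real_poly_def map_poly_pCons map_poly_smult map_poly_eq_0_iff degree_map_poly)

lemma of_real_poly_add [simp]: "of_real_poly (p + q) = of_real_poly p + of_real_poly q"
  and of_real_poly_diff [simp]: "of_real_poly (p - q) = of_real_poly p - of_real_poly q"
  by (simp_all add: poly_eq_iff of_real_poly_def coeff_map_poly)

lemma of_real_poly_mult [simp]: "of_real_poly (p * q) = of_real_poly p * of_real_poly q"
  by (induction p) simp_all

lemma of_real_poly_power [simp]: "of_real_poly (p ^ n) = of_real_poly p ^ n"
  by (induction n) simp_all

lemma of_real_poly_pcompose: "of_real_poly (pcompose p q) = pcompose (of_real_poly p) (of_real_poly q)"
  by (induction p) (simp_all add: pcompose_pCons)

lemma poly_of_real_poly_of_real [simp]: "poly (of_real_poly p) (of_real x) = of_real (poly p x)"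
  by (induction p) simp_all

lemma of_real_poly_dvd: "p dvd q \<Longrightarrow> of_real_poly p dvd of_real_poly q"
  by (metis dvd_def of_real_poly_mult)

lemma poly_pderiv_eq_0_if_square_dvd:
  fixes g :: "'a :: idom poly"
  assumes "[:-b, 1:] ^ 2 dvd g"
  shows "poly (pderiv g) b = 0"
proof -
  define x where "x = [:-b, 1:]"
  obtain k where "g = x ^ 2 * k"
    using assms unfolding x_def[symmetric] by (rule dvdE)
  then have "g = x * (x * k)"
    by (simp only: power2_eq_square mult.assoc)
  moreover have "poly x b = 0"
    by (simp add: x_def)
  ultimately show ?thesis
    by (simp add: pderiv_mult)
qed

text \<open>The gcd of h and g is a constant multiple of X - b: any further factor would give g either
  a second complex root in common with h or a double root at b. Its coefficients lie in F because
  Euclid's algorithm never leaves F.\<close>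
lemma simple_common_root_in_subfield:
  assumes F: "real_subfield F"
    and over: "poly_over F h" "poly_over F g" and "g \<noteq> 0"
    and roots: "poly g b = 0" "poly (pderiv g) b \<noteq> 0" "poly h b = 0"
    and unique: "\<And>z. poly (of_real_poly g) z = 0 \<Longrightarrow> poly (of_real_poly h) z = 0 \<Longrightarrow> z = of_real b"
  shows "b \<in> F"
proof -
  define d where "d = gcd h g"
  have "[:-b, 1:] dvd d"
    using roots by (simp add: d_def poly_eq_0_iff_dvd)
  then obtain e where e: "d = [:-b, 1:] * e"
    by (rule dvdE)
  have "d \<noteq> 0"
    using \<open>g \<noteq> 0\<close> by (simp add: d_def)
  have "degree e = 0"
  proof (rule ccontr)
    assume "degree e \<noteq> 0"
    then obtain z where z: "poly (of_real_poly e) z = 0"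
      using fundamental_theorem_of_algebra[of "of_real_poly e"] by (auto simp: constant_degree)
    have "of_real_poly d dvd of_real_poly g" "of_real_poly d dvd of_real_poly h"
      by (simp_all add: d_def of_real_poly_dvd)
    moreover have "[:-z, 1:] dvd of_real_poly e"
      using z by (simp add: poly_eq_0_iff_dvd)
    then have "[:-z, 1:] dvd of_real_poly d"
      unfolding e of_real_poly_mult by (rule dvd_mult)
    ultimately have "[:-z, 1:] dvd of_real_poly g" "[:-z, 1:] dvd of_real_poly h"
      by (blast intro: dvd_trans)+
    then have "z = of_real b"
      by (intro unique) (simp_all add: poly_eq_0_iff_dvd)
    with z have "poly e b = 0"
      by simp
    then have "[:-b, 1:] dvd e"
      by (simp add: poly_eq_0_iff_dvd)
    then have "[:-b, 1:] ^ 2 dvd d"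
      unfolding e power2_eq_square by (rule mult_dvd_mono[OF dvd_refl])
    then have "[:-b, 1:] ^ 2 dvd g"
      by (rule dvd_trans) (simp add: d_def)
    then show False
      using roots(2) poly_pderiv_eq_0_if_square_dvd by blast
  qed
  then obtain c where c: "e = [:c:]"
    by (rule degree_eq_zeroE)
  with e \<open>d \<noteq> 0\<close> have "c \<noteq> 0"
    by auto
  have "poly_over F d"
    unfolding d_def using F over by (rule poly_over_gcd)
  then have "coeff d 0 \<in> F" "coeff d 1 \<in> F"
    by (simp_all add: poly_over_def)
  then have "- coeff d 0 / coeff d 1 \<in> F"
    using F by (simp add: real_subfield_divide real_subfield_uminus)
  then show ?thesis
    using \<open>c \<noteq> 0\<close> by (simp add: e c)
qed


section \<open>The primitive element theorem\<close>

lemma exists_of_nat_ge_not_in_finite: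
  fixes S :: "'a :: semiring_char_0 set"
  assumes "finite S"
  shows "\<exists>n\<ge>N. of_nat n \<notin> S"
proof -
  have "inj_on (of_nat :: nat \<Rightarrow> 'a) {N..}"
    by (simp add: inj_on_def)
  then have "infinite (of_nat ` {N..} - S :: 'a set)"
    using assms infinite_Ici[of N] by (simp add: Diff_infinite_finite finite_image_iff)
  then obtain y where "y \<in> of_nat ` {N..}" "y \<notin> S"
    using infinite_imp_nonempty by blast
  then show ?thesis
    by blast
qed

text \<open>Both numbers lie in the field generated by a + n b as soon as n avoids the finitely many
  values (w - a) / (b - z) built from conjugates w of a and z of b.\<close>
lemma primitive_element_step:
  assumes a: "algebraic a" and b: "algebraic b"
  shows "\<exists>n::nat. a \<in> Q_adjoin (a + of_nat n * b) \<and> b \<in> Q_adjoin (a + of_nat n * b)"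
proof -
  obtain f where f: "f \<noteq> 0" "poly (of_rat_poly f) a = 0"
    using a by (auto simp: algebraic_iff_rat_poly_root)
  obtain g where g: "is_minpoly g b"
    using minpoly_exists[OF b] ..
  let ?f = "of_real_poly (of_rat_poly f)" and ?g = "of_real_poly (of_rat_poly g)"
  define Bad where "Bad = (\<lambda>(w, z). (w - of_real a) / (of_real b - z)) `
    ({w. poly ?f w = 0} \<times> {z. poly ?g z = 0})"
  have "finite Bad"
    unfolding Bad_def using f(1) minpoly_nonzero[OF g] by (simp add: poly_roots_finite)
  then obtain n :: nat where n: "of_nat n \<notin> Bad"
    using exists_of_nat_ge_not_in_finite by blast
  define d where "d = a + of_nat n * b"
  define h where "h = pcompose (of_rat_poly f) [:d, - of_nat n:]"
  have F: "real_subfield (Q_adjoin d)" and d: "d \<in> Q_adjoin d"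
    by (rule real_subfield_Q_adjoin Q_adjoin_self)+
  have "b \<in> Q_adjoin d"
  proof (rule simple_common_root_in_subfield[OF F])
    show "poly_over (Q_adjoin d) h"
      unfolding h_def using F d
      by (simp add: poly_over_pcompose poly_over_of_rat_poly poly_over_pCons poly_over_const
          real_subfield_closed)
    show "poly_over (Q_adjoin d) (of_rat_poly g)" "of_rat_poly g \<noteq> 0"
      "poly (of_rat_poly g) b = 0" "poly (pderiv (of_rat_poly g)) b \<noteq> 0"
      using F g by (simp_all add: poly_over_of_rat_poly minpoly_nonzero minpoly_root
          minpoly_simple_root)
    show "poly h b = 0"
      using f(2) by (simp add: h_def d_def poly_pcompose)
    fix z
    assume z: "poly ?g z = 0" "poly (of_real_poly h) z = 0"
    then have w: "poly ?f (of_real d - of_nat n * z) = 0"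
      by (simp add: h_def of_real_poly_pcompose poly_pcompose algebra_simps)
    show "z = of_real b"
    proof (rule ccontr)
      assume "z \<noteq> of_real b"
      then have "of_nat n = (of_real d - of_nat n * z - of_real a) / (of_real b - z)"
        by (simp add: d_def field_simps)
      also have "\<dots> \<in> Bad"
        unfolding Bad_def using w z(1) by force
      finally show False
        using n by contradiction
    qed
  qed
  moreover have "a = d - of_nat n * b"
    by (simp add: d_def)
  ultimately have "a \<in> Q_adjoin d"
    using F d by (simp add: real_subfield_closed)
  with \<open>b \<in> Q_adjoin d\<close> show ?thesis
    unfolding d_def by blast
qed

lemma finite_subset_Q_adjoin:
  assumes K: "real_number_field K" and "finite S" "S \<subseteq> K"
  shows "\<exists>x\<in>K. S \<subseteq> Q_adjoin x"
  using assms(2,3)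
proof (induction S rule: finite_induct)
  case empty
  then show ?case
    using K real_subfield_0 real_number_field_subfield by blast
next
  case (insert b S)
  then obtain x where x: "x \<in> K" "S \<subseteq> Q_adjoin x"
    by blast
  moreover have "b \<in> K"
    using insert.prems by simp
  ultimately obtain n :: nat where n: "x \<in> Q_adjoin (x + of_nat n * b)" "b \<in> Q_adjoin (x + of_nat n * b)"
    using primitive_element_step real_number_field_algebraic[OF K] by blast
  have "x + of_nat n * b \<in> K"
    using K x(1) \<open>b \<in> K\<close> by (simp add: real_number_field_subfield real_subfield_closed)
  moreover have "insert b S \<subseteq> Q_adjoin (x + of_nat n * b)"
    using x(2) n Q_adjoin_subset by blast
  ultimately show ?case
    by blast
qed

lemma real_number_field_primitive_element:
  assumes K: "real_number_field K"
  obtains \<xi> where "\<xi> \<in> K" "Q_adjoin \<xi> = K"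
proof -
  obtain B where B: "finite B" "B \<subseteq> K" "\<forall>y\<in>K. \<exists>c. y = (\<Sum>b\<in>B. of_rat (c b) * b)"
    using K unfolding real_number_field_def by blast
  obtain \<xi> where \<xi>: "\<xi> \<in> K" "B \<subseteq> Q_adjoin \<xi>"
    using finite_subset_Q_adjoin[OF K B(1,2)] by blast
  have "K \<subseteq> Q_adjoin \<xi>"
    using B(3) \<xi>(2) real_subfield_Q_adjoin
    by (fastforce intro!: real_subfield_sum real_subfield_mult real_subfield_of_rat)
  then show ?thesis
    using that \<xi>(1) K by (simp add: Q_adjoin_eqI real_number_field_subfield)
qed


section \<open>Generating the field by M + 1/M\<close>

lemma finite_shifted_quadratic_coincidences:
  fixes \<alpha> \<beta> \<gamma> \<delta> z \<xi> :: complex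
  assumes "\<gamma> \<noteq> 0" "z \<noteq> \<xi>"
  shows "finite {s. \<alpha> * (z + s)^2 + \<beta> = \<gamma> * (\<xi> + s)^2 + \<delta>}"
    and "finite {s. (\<alpha> * (z + s)^2 + \<beta>) * (\<gamma> * (\<xi> + s)^2 + \<delta>) = 1}"
proof -
  define p where "p = [:\<alpha> * z^2 + \<beta>, 2 * \<alpha> * z, \<alpha>:]"
  define q where "q = [:\<gamma> * \<xi>^2 + \<delta>, 2 * \<gamma> * \<xi>, \<gamma>:]"
  have p: "poly p s = \<alpha> * (z + s)^2 + \<beta>" and q: "poly q s = \<gamma> * (\<xi> + s)^2 + \<delta>" for s
    by (simp_all add: p_def q_def power2_eq_square algebra_simps)
  have "p \<noteq> q"
  proof
    assume "p = q"
    then have "coeff p 2 = coeff q 2" "coeff p 1 = coeff q 1"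
      by simp_all
    then have "\<alpha> = \<gamma>" "2 * \<alpha> * z = 2 * \<gamma> * \<xi>"
      by (simp_all add: p_def q_def numeral_2_eq_2)
    then show False
      using assms by simp
  qed
  then have "finite {s. poly (p - q) s = 0}"
    by (intro poly_roots_finite) simp
  then show "finite {s. \<alpha> * (z + s)^2 + \<beta> = \<gamma> * (\<xi> + s)^2 + \<delta>}"
    by (simp add: p q)
  have "degree q = 2"
    using assms(1) by (simp add: q_def)
  have "p * q \<noteq> 1"
  proof
    assume pq: "p * q = 1"
    then have "p \<noteq> 0" "q \<noteq> 0"
      by auto
    then have "degree (p * q) = degree p + 2"
      using \<open>degree q = 2\<close> by (simp add: degree_mult_eq)
    with pq show False
      by simp
  qed
  then have "finite {s. poly (p * q - 1) s = 0}"
    by (intro poly_roots_finite) simp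
  then show "finite {s. (\<alpha> * (z + s)^2 + \<beta>) * (\<gamma> * (\<xi> + s)^2 + \<delta>) = 1}"
    by (simp add: p q)
qed

text \<open>A conjugate z of xi with m(z) = M or m(z) = 1/M is the only obstruction, because
  m(xi) is a root of the polynomial X^2 - (M + 1/M) X + 1 = (X - M) (X - 1/M) over Q(M + 1/M).\<close>
lemma minpoly_root_in_Q_adjoin_plus_inverse:
  assumes g: "is_minpoly g \<xi>" and M: "M = poly (of_rat_poly m) \<xi>" "M \<noteq> 0"
    and conjugates: "\<And>z. poly (of_real_poly (of_rat_poly g)) z = 0 \<Longrightarrow> z \<noteq> of_real \<xi> \<Longrightarrow>
      poly (of_real_poly (of_rat_poly m)) z \<notin> {of_real M, 1 / of_real M}"
  shows "\<xi> \<in> Q_adjoin (M + 1 / M)"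
proof -
  define W where "W = M + 1 / M"
  define h where "h = of_rat_poly m ^ 2 - smult W (of_rat_poly m) + 1"
  have F: "real_subfield (Q_adjoin W)"
    by (rule real_subfield_Q_adjoin)
  have quadratic: "(t - x) * (t - y) = t^2 - (x + y) * t + x * y" for t x y :: complex
    by (simp add: algebra_simps power2_eq_square)
  have factor: "t^2 - of_real W * t + 1 = (t - of_real M) * (t - 1 / of_real M)" for t :: complex
    using quadratic[of t "of_real M" "1 / of_real M"] M(2) by (simp add: W_def)
  have poly_h: "poly (of_real_poly h) z = t^2 - of_real W * t + 1"
    if "t = poly (of_real_poly (of_rat_poly m)) z" for t z
    using that by (simp add: h_def)
  show ?thesis
    unfolding W_def[symmetric]
  proof (rule simple_common_root_in_subfield[OF F])
    show "poly_over (Q_adjoin W) h"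
      unfolding h_def using F Q_adjoin_self[of W]
      by (intro poly_over_add poly_over_diff poly_over_power poly_over_smult
          poly_over_of_rat_poly poly_over_1)
    show "poly_over (Q_adjoin W) (of_rat_poly g)" "of_rat_poly g \<noteq> 0"
      "poly (of_rat_poly g) \<xi> = 0" "poly (pderiv (of_rat_poly g)) \<xi> \<noteq> 0"
      using F g by (simp_all add: poly_over_of_rat_poly minpoly_nonzero minpoly_root
          minpoly_simple_root)
    have "poly (of_real_poly h) (of_real \<xi>) = 0"
      using poly_h[of "of_real M" "of_real \<xi>"] factor[of "of_real M"] M(1) by simp
    then show "poly h \<xi> = 0"
      by simp
    fix z
    assume z: "poly (of_real_poly (of_rat_poly g)) z = 0" "poly (of_real_poly h) z = 0"
    then have "poly (of_real_poly (of_rat_poly m)) z \<in> {of_real M, 1 / of_real M}"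
      using poly_h factor by (metis diff_eq_eq eq_iff_diff_eq_0 insert_iff mult_eq_0_iff)
    then show "z = of_real \<xi>"
      using conjugates z(1) by blast
  qed
qed

lemma finite_shifts_not_generating:
  assumes g: "is_minpoly g \<xi>"
    and A: "a = poly (of_rat_poly A) \<xi>" and C: "c = poly (of_rat_poly C) \<xi>" and "a > 0" "c > 0"
  shows "finite {n::nat. \<xi> \<notin> Q_adjoin (a * (\<xi> + n)^2 + c + 1 / (a * (\<xi> + n)^2 + c))}"
proof -
  let ?g = "of_real_poly (of_rat_poly g)"
  let ?A = "poly (of_real_poly (of_rat_poly A))" and ?C = "poly (of_real_poly (of_rat_poly C))"
  let ?M = "\<lambda>s. of_real a * (of_real \<xi> + s)^2 + of_real c"
  define Z where "Z = {z. poly ?g z = 0 \<and> z \<noteq> of_real \<xi>}"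
  define Bad where "Bad = (\<Union>z\<in>Z. {s. ?A z * (z + s)^2 + ?C z = ?M s} \<union>
    {s. (?A z * (z + s)^2 + ?C z) * ?M s = 1})"
  have "finite Z"
    using poly_roots_finite[of ?g] minpoly_nonzero[OF g] by (auto simp: Z_def elim: finite_subset[rotated])
  then have "finite Bad"
    unfolding Bad_def using \<open>a > 0\<close>
    by (auto simp: Z_def intro!: finite_shifted_quadratic_coincidences)
  have "n \<in> of_nat -` Bad"
    if n: "\<xi> \<notin> Q_adjoin (a * (\<xi> + n)^2 + c + 1 / (a * (\<xi> + n)^2 + c))" for n :: nat
  proof (rule ccontr)
    assume "n \<notin> of_nat -` Bad"
    define m where "m = A * [:of_nat n, 1:]^2 + C"
    define M where "M = a * (\<xi> + n)^2 + c"
    have "M > 0"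
      using \<open>a > 0\<close> \<open>c > 0\<close> by (simp add: M_def add_nonneg_pos)
    then have M: "M = poly (of_rat_poly m) \<xi>" "M \<noteq> 0"
      using A C by (simp_all add: M_def m_def algebra_simps)
    have "poly (of_real_poly (of_rat_poly m)) z \<notin> {of_real M, 1 / of_real M}"
      if "poly ?g z = 0" "z \<noteq> of_real \<xi>" for z
    proof -
      have eqM: "?M (of_nat n) = of_real M"
        by (simp add: M_def)
      have eqm: "poly (of_real_poly (of_rat_poly m)) z = ?A z * (z + of_nat n)^2 + ?C z"
        by (simp add: m_def algebra_simps)
      have "z \<in> Z"
        using that by (simp add: Z_def)
      then have "?A z * (z + of_nat n)^2 + ?C z \<noteq> ?M (of_nat n)"
        "(?A z * (z + of_nat n)^2 + ?C z) * ?M (of_nat n) \<noteq> 1"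
        using \<open>n \<notin> of_nat -` Bad\<close> unfolding Bad_def by blast+
      then show ?thesis
        unfolding eqm[symmetric] eqM using M(2) by auto
    qed
    then have "\<xi> \<in> Q_adjoin (M + 1 / M)"
      by (rule minpoly_root_in_Q_adjoin_plus_inverse[OF g M])
    with n show False
      by (simp add: M_def)
  qed
  then have "{n. \<xi> \<notin> Q_adjoin (a * (\<xi> + n)^2 + c + 1 / (a * (\<xi> + n)^2 + c))} \<subseteq> of_nat -` Bad"
    by blast
  moreover have "finite (of_nat -` Bad :: nat set)"
    using \<open>finite Bad\<close> inj_of_nat by (rule finite_vimageI)
  ultimately show ?thesis
    by (rule finite_subset)
qed

lemma real_number_field_generated_by_M_plus_inverse:
  assumes K: "real_number_field K" and "a \<in> K" "c \<in> K" "a > 0" "c > 0"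
  obtains x0 where "x0 \<in> K" "x0 \<ge> 1" "a * x0 \<ge> 1"
    "K \<subseteq> Q_adjoin (a * x0^2 + c + 1 / (a * x0^2 + c))"
proof -
  obtain \<xi> where \<xi>: "\<xi> \<in> K" "Q_adjoin \<xi> = K"
    using real_number_field_primitive_element[OF K] .
  have alg: "algebraic \<xi>"
    using real_number_field_algebraic[OF K \<xi>(1)] .
  obtain A C where A: "a = poly (of_rat_poly A) \<xi>" and C: "c = poly (of_rat_poly C) \<xi>"
    using Q_adjoin_algebraicE[OF alg] \<xi>(2) \<open>a \<in> K\<close> \<open>c \<in> K\<close> by metis
  obtain g where g: "is_minpoly g \<xi>"
    using minpoly_exists[OF alg] ..
  have "\<exists>n\<ge>nat \<lceil>max 1 (1 / a) - \<xi>\<rceil>.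
      of_nat n \<notin> {n :: nat. \<xi> \<notin> Q_adjoin (a * (\<xi> + n)^2 + c + 1 / (a * (\<xi> + n)^2 + c))}"
    by (rule exists_of_nat_ge_not_in_finite[OF finite_shifts_not_generating[OF g A C]]) fact+
  then obtain n :: nat where n: "n \<ge> nat \<lceil>max 1 (1 / a) - \<xi>\<rceil>"
    and "of_nat n \<notin> {n :: nat. \<xi> \<notin> Q_adjoin (a * (\<xi> + n)^2 + c + 1 / (a * (\<xi> + n)^2 + c))}"
    by blast
  then have gen: "\<xi> \<in> Q_adjoin (a * (\<xi> + n)^2 + c + 1 / (a * (\<xi> + n)^2 + c))"
    by simp
  define x0 where "x0 = \<xi> + n"
  have "x0 \<ge> 1" "x0 \<ge> 1 / a"
    using n unfolding x0_def by linarith+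
  then have "a * x0 \<ge> 1"
    using \<open>a > 0\<close> by (simp add: field_simps)
  moreover have "x0 \<in> K"
    using K \<xi>(1) by (simp add: x0_def real_number_field_subfield real_subfield_closed)
  moreover have "K \<subseteq> Q_adjoin (a * x0^2 + c + 1 / (a * x0^2 + c))"
    using Q_adjoin_subset[OF gen] \<xi>(2) by (simp add: x0_def)
  ultimately show ?thesis
    using that \<open>x0 \<ge> 1\<close> by blast
qed


section \<open>The explicit solution\<close>

lemma exists_rat_square_slightly_above:
  fixes a d :: real
  assumes "a > 0" "d > 0"
  shows "\<exists>t\<in>\<rat>. t > 0 \<and> 1 < a * t^2 \<and> a * t^2 < 1 + d"
proof -
  have "sqrt (1 / a) < sqrt ((1 + d) / a)"
    using assms by (simp add: divide_strict_right_mono)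
  then obtain t where t: "t \<in> \<rat>" "sqrt (1 / a) < t" "t < sqrt ((1 + d) / a)"
    using Rats_dense_in_real by blast
  have "sqrt (1 / a) > 0"
    using assms by simp
  with t have "t > 0"
    by linarith
  have "(sqrt (1 / a))^2 < t^2" "t^2 < (sqrt ((1 + d) / a))^2"
    using t \<open>sqrt (1 / a) > 0\<close> \<open>t > 0\<close> by (intro power_strict_mono; simp)+
  then have "1 / a < t^2" "t^2 < (1 + d) / a"
    using assms by simp_all
  then show ?thesis
    using t(1) \<open>t > 0\<close> assms by (auto simp: field_simps)
qed

lemma form_eq_positive_multiple_of_square:
  assumes K: "real_subfield K" and "a \<in> K" "b \<in> K" "a > 0" "b \<noteq> 0"
  obtains c where "c \<in> K" "c > 0" "\<And>k. k \<in> K \<Longrightarrow> \<exists>v\<in>K. \<exists>w\<in>K. a * b * w^2 - b * v^2 = a * c * k^2"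
proof (cases "b > 0")
  case True
  show ?thesis
  proof (rule that)
    show "b \<in> K" "b > 0"
      using True assms by simp_all
    show "\<exists>v\<in>K. \<exists>w\<in>K. a * b * w^2 - b * v^2 = a * b * k^2" if "k \<in> K" for k
      using that real_subfield_0[OF K] by (intro bexI[of _ 0] bexI[of _ k]) simp_all
  qed
next
  case False
  with assms have "- a * b > 0" "- a * b \<in> K"
    by (simp_all add: mult_pos_neg real_subfield_closed)
  moreover have "\<exists>v\<in>K. \<exists>w\<in>K. a * b * w^2 - b * v^2 = a * (- a * b) * k^2" if "k \<in> K" for k
    using that K \<open>a \<in> K\<close> real_subfield_0[OF K]
    by (intro bexI[of _ "a * k"] bexI[of _ 0]) (simp_all add: real_subfield_mult power2_eq_square)
  ultimately show ?thesis
    using that by blast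
qed

lemma Cayley_square_minus_one:
  fixes M :: real
  assumes "M \<noteq> 1"
  shows "((M + 1) / (M - 1))^2 - 1 = 4 * M / (M - 1)^2"
proof -
  have "(M - 1)^2 \<noteq> 0"
    using assms by simp
  then have "((M + 1) / (M - 1))^2 - 1 = ((M + 1)^2 - (M - 1)^2) / (M - 1)^2"
    unfolding power_divide by (simp add: diff_divide_distrib)
  also have "(M + 1)^2 - (M - 1)^2 = 4 * M"
    by (simp add: power2_eq_square algebra_simps)
  finally show ?thesis .
qed

text \<open>Since M + 1/M = 2 (theta^2 + 1) / (theta^2 - 1) for theta = (M + 1) / (M - 1).\<close>
lemma Q_adjoin_Cayley_transform:
  assumes K: "real_subfield K" and "M \<in> K" "M > 1" and gen: "K \<subseteq> Q_adjoin (M + 1 / M)"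
  shows "Q_adjoin ((M + 1) / (M - 1)) = K" "Q_adjoin (((M + 1) / (M - 1))^2) = K"
proof -
  define \<theta> where "\<theta> = (M + 1) / (M - 1)"
  have D: "(M - 1)^2 \<noteq> 0"
    using \<open>M > 1\<close> by simp
  have "\<theta>^2 - 1 = ((M + 1)^2 - (M - 1)^2) / (M - 1)^2" "\<theta>^2 + 1 = ((M + 1)^2 + (M - 1)^2) / (M - 1)^2"
    unfolding \<theta>_def power_divide using D by (simp_all add: diff_divide_distrib add_divide_distrib)
  moreover have "(M + 1)^2 - (M - 1)^2 = 4 * M" "(M + 1)^2 + (M - 1)^2 = 2 * (M^2 + 1)"
    by (simp_all add: power2_eq_square algebra_simps)
  ultimately have "2 * (\<theta>^2 + 1) / (\<theta>^2 - 1) = (4 * (M^2 + 1)) / (4 * M)"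
    using D by simp
  also have "\<dots> = (M^2 + 1) / M"
    by (rule mult_divide_mult_cancel_left) simp
  also have "\<dots> = M + 1 / M"
    using \<open>M > 1\<close> by (simp add: power2_eq_square add_divide_distrib)
  finally have "M + 1 / M = 2 * (\<theta>^2 + 1) / (\<theta>^2 - 1)"
    by simp
  then have "M + 1 / M \<in> Q_adjoin (\<theta>^2)"
    using real_subfield_Q_adjoin Q_adjoin_self by (simp add: real_subfield_closed)
  then have "K \<subseteq> Q_adjoin (\<theta>^2)"
    using gen Q_adjoin_subset by blast
  moreover have "\<theta>^2 \<in> Q_adjoin \<theta>"
    by (simp add: Q_adjoin_self real_subfield_Q_adjoin real_subfield_power)
  moreover have "\<theta> \<in> K"
    using K \<open>M \<in> K\<close> by (simp add: \<theta>_def real_subfield_closed)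
  ultimately show "Q_adjoin \<theta> = K" "Q_adjoin (\<theta>^2) = K"
    using K Q_adjoin_subset by (metis Q_adjoin_eqI real_subfield_power subset_trans)+
qed

lemma form_identity:
  fixes a c x0 u M :: real
  assumes "M = a * x0^2 + c" "M \<noteq> 1"
  defines "k \<equiv> 2 * u / (M - 1)"
  shows "(a * x0 * k)^2 - a * ((M + 1) / (M - 1) * u)^2 + a * u^2 + a * c * k^2 = 0"
proof -
  have "(a * x0 * k)^2 + a * c * k^2 = a * k^2 * M"
    by (simp add: assms(1) power2_eq_square algebra_simps)
  also have "\<dots> = a * u^2 * (((M + 1) / (M - 1))^2 - 1)"
    unfolding Cayley_square_minus_one[OF assms(2)] by (simp add: k_def power_divide)
  also have "\<dots> = a * ((M + 1) / (M - 1) * u)^2 - a * u^2"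
    using power_mult_distrib[of _ u 2] by (simp only: algebra_simps)
  finally show ?thesis
    by simp
qed

lemma pell_identity:
  fixes a t e :: "'a :: field"
  assumes "a * t^2 = 1 + e" "e \<noteq> 0"
  shows "(2 + 4 / e)^2 - 4 = a * (4 * t / e)^2"
proof -
  have "(2 + 4 / e)^2 - 4 = (4 / e) * (4 + 4 / e)"
    by (simp add: power2_eq_square algebra_simps)
  also have "\<dots> = 16 * (1 + e) / e^2"
    using assms(2) by (simp add: power2_eq_square add_divide_distrib)
  also have "\<dots> = a * (4 * t / e)^2"
    unfolding power_divide power_mult_distrib assms(1)[symmetric] by simp
  finally show ?thesis .
qed

lemma quadratic_form_witnesses:
  fixes a c x0 t e M :: real
  assumes F: "real_subfield F" and in_F: "a \<in> F" "c \<in> F" "x0 \<in> F" "t \<in> F"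
    and pos: "a > 0" "c > 0" "a * x0 \<ge> 1" "t > 0"
    and M: "M = a * x0^2 + c" "M > 1"
    and e: "a * t^2 = 1 + e" "0 < e" "e < 1" "e * (M - 1)^2 < c"
  shows "\<exists>x\<in>F. \<exists>y\<in>F. \<exists>z\<in>F. \<exists>u\<in>F. \<exists>k\<in>F.
    x^2 - a * y^2 + a * u^2 + a * c * k^2 = 0 \<and> z^2 - 4 = a * u^2 \<and>
    y / u = (M + 1) / (M - 1) \<and> u \<noteq> 0 \<and> x + y * z / (2 * u) > 2 \<and> z > 2 \<and> a * c * k^2 > 4"
proof -
  define u where "u = 4 * t / e"
  define z where "z = 2 + 4 / e"
  define k where "k = 2 * u / (M - 1)"
  define y where "y = (M + 1) / (M - 1) * u"
  define x where "x = a * x0 * k"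
  have "e = a * t^2 - 1" "M \<in> F"
    using e(1) M(1) F in_F by (simp_all add: real_subfield_closed)
  then have "u \<in> F" "z \<in> F" "k \<in> F" "y \<in> F" "x \<in> F"
    using F in_F by (simp_all add: u_def z_def k_def y_def x_def real_subfield_closed)
  moreover have "x^2 - a * y^2 + a * u^2 + a * c * k^2 = 0"
    using M unfolding x_def y_def k_def by (intro form_identity) simp_all
  moreover have "z^2 - 4 = a * u^2"
    using e(1,2) unfolding z_def u_def by (intro pell_identity) simp_all
  moreover have "u > 0"
    using pos(4) e(2) by (simp add: u_def)
  moreover have "x + y * z / (2 * u) > 2"
  proof -
    define w where "w = (M + 1) / (M - 1) * z"
    have "y * z / (2 * u) = w / 2"
      using \<open>u > 0\<close> by (simp add: y_def w_def)
    moreover have "z > 6"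
      using e(2,3) by (simp add: z_def less_divide_eq)
    then have "w > 1 * 6"
      unfolding w_def using M(2) by (intro mult_strict_mono) simp_all
    moreover have "x > 0"
      using pos \<open>u > 0\<close> M(2) by (simp add: x_def k_def)
    ultimately show ?thesis
      by linarith
  qed
  moreover have "a * c * k^2 > 4"
  proof -
    have "e^2 * (M - 1)^2 \<le> e * (M - 1)^2"
      using e(2,3) by (intro mult_right_mono) (simp_all add: power2_eq_square)
    then have "(M - 1)^2 < c / e^2"
      using e(2,4) by (simp add: less_divide_eq mult.commute)
    also have "\<dots> \<le> c * (a * u^2)"
      using e(1,2) pos(2) by (simp add: u_def power_divide power_mult_distrib
          divide_le_cancel mult_le_cancel_left_pos)
    finally have "4 < 4 * (c * (a * u^2)) / (M - 1)^2"
      using M(2) by (simp add: less_divide_eq)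
    also have "\<dots> = a * c * k^2"
      by (simp add: k_def power_divide power_mult_distrib)
    finally show ?thesis .
  qed
  ultimately show ?thesis
    using \<open>u > 0\<close> e(2) by (intro bexI[of _ x] bexI[of _ y] bexI[of _ z] bexI[of _ u] bexI[of _ k])
      (simp_all add: y_def z_def)
qed

lemma exists_quadratic_form_witnesses:
  fixes a c x0 M :: real
  assumes F: "real_subfield F" and in_F: "a \<in> F" "c \<in> F" "x0 \<in> F"
    and pos: "a > 0" "c > 0" "a * x0 \<ge> 1" and M: "M = a * x0^2 + c" "M > 1"
  shows "\<exists>x\<in>F. \<exists>y\<in>F. \<exists>z\<in>F. \<exists>u\<in>F. \<exists>k\<in>F.
    x^2 - a * y^2 + a * u^2 + a * c * k^2 = 0 \<and> z^2 - 4 = a * u^2 \<and>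
    y / u = (M + 1) / (M - 1) \<and> u \<noteq> 0 \<and> x + y * z / (2 * u) > 2 \<and> z > 2 \<and> a * c * k^2 > 4"
proof -
  have "min 1 (c / (M - 1)^2) > 0"
    using pos M(2) by simp
  then obtain t where t: "t \<in> \<rat>" "t > 0" "1 < a * t^2" "a * t^2 < 1 + min 1 (c / (M - 1)^2)"
    using exists_rat_square_slightly_above[OF pos(1)] by blast
  then have "a * t^2 - 1 < 1" "a * t^2 - 1 < c / (M - 1)^2"
    by linarith+
  then show ?thesis
    using t M(2) by (intro quadratic_form_witnesses[OF F in_F real_subfield_Rats[OF F] pos t(2) M])
      (simp_all add: less_divide_eq)
qed

theorem theorem4p1:
  fixes K :: "real set" and a b :: real
  assumes "real_number_field K" and "a \<in> K" and "b \<in> K" and "a > 0" and "b \<noteq> 0"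
  shows "\<exists>x\<in>K. \<exists>y\<in>K. \<exists>z\<in>K. \<exists>u\<in>K. \<exists>v\<in>K. \<exists>w\<in>K.
           x^2 - a * y^2 + a * u^2 - b * v^2 + a * b * w^2 = 0 \<and>
           z^2 - 4 = a * u^2 \<and>
           Q_adjoin (y / u) = K \<and> Q_adjoin (y^2 / u^2) = K \<and>
           u \<noteq> 0 \<and> x + y * z / (2 * u) > 2 \<and> y / u > 1 \<and> z > 2 \<and>
           a * b * w^2 - b * v^2 > 4"
proof -
  note K = real_number_field_subfield[OF assms(1)]
  obtain c where c: "c \<in> K" "c > 0"
    and vw: "\<And>k. k \<in> K \<Longrightarrow> \<exists>v\<in>K. \<exists>w\<in>K. a * b * w^2 - b * v^2 = a * c * k^2"
    using form_eq_positive_multiple_of_square[OF K assms(2-5)] by blast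
  obtain x0 where x0: "x0 \<in> K" "x0 \<ge> 1" "a * x0 \<ge> 1"
    and gen: "K \<subseteq> Q_adjoin (a * x0^2 + c + 1 / (a * x0^2 + c))"
    using real_number_field_generated_by_M_plus_inverse[OF assms(1,2) c(1) assms(4) c(2)] by blast
  define M where "M = a * x0^2 + c"
  have "M \<in> K" "M > 1"
    using K assms(2) x0 c mult_mono[OF x0(3,2)]
    by (simp_all add: M_def power2_eq_square real_subfield_closed mult.assoc)
  obtain x y z u k where xyzuk: "x \<in> K" "y \<in> K" "z \<in> K" "u \<in> K" "k \<in> K"
    "x^2 - a * y^2 + a * u^2 + a * c * k^2 = 0" "z^2 - 4 = a * u^2" "y / u = (M + 1) / (M - 1)"
    "u \<noteq> 0" "x + y * z / (2 * u) > 2" "z > 2" "a * c * k^2 > 4"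
    using exists_quadratic_form_witnesses[OF K assms(2) c(1) x0(1) assms(4) c(2) x0(3) M_def \<open>M > 1\<close>]
    by blast
  obtain v w where "v \<in> K" "w \<in> K" and vw_k: "a * b * w^2 - b * v^2 = a * c * k^2"
    using vw[OF xyzuk(5)] by blast
  have "x^2 - a * y^2 + a * u^2 - b * v^2 + a * b * w^2 = 0" "a * b * w^2 - b * v^2 > 4"
    using xyzuk(6,12) vw_k by linarith+
  moreover have "Q_adjoin (y / u) = K" "Q_adjoin (y^2 / u^2) = K"
    using Q_adjoin_Cayley_transform[OF K \<open>M \<in> K\<close> \<open>M > 1\<close>] gen xyzuk(8)
    by (simp_all add: M_def power_divide[symmetric])
  moreover have "y / u > 1"
    using xyzuk(8) \<open>M > 1\<close> by simp
  ultimately show ?thesis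
    using xyzuk \<open>v \<in> K\<close> \<open>w \<in> K\<close>
    by (intro bexI[of _ x] bexI[of _ y] bexI[of _ z] bexI[of _ u] bexI[of _ v] bexI[of _ w] conjI)
      assumption+
qed

end
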